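(* Let $(N,\mathcal{M})$ be a matroid of rank $K$, $Z$ monotone submodular with $Z(\emptyset)=0$, $G=(g_1,\dots,g_K)$ the output of a run of GREEDY, and $\Omega$ an optimal basis ordered as $(\omega_1,\dots,\omega_K)$ so that $G^{i-1}\cup\{\omega_i\}\in\mathcal{M}$ for all $i$ and $\omega_i\in G\cap\Omega$ implies $\omega_i=g_i$. Then for every $t\in\{1,\dots,K\}$ and every $i$ with $\omega_i\in\Omega\setminus G$: $$\rho_{\omega_i}(G^{t-1})\le\begin{cases}\rho_t, & i>t,\\[2pt] \dfrac{\rho_i}{d_i}, & 1\le i\le t.\end{cases}$$
   Context: Matroid $(N,\mathcal{M})$ of rank $K$ (independent sets containing $\emptyset$, closed under subsets, with augmentation); basis = independent set of size $K$; optimal basis = basis maximizing $Z$ over $\mathcal{M}$. $\rho_q(S)=Z(S\cup\{q\})-Z(S)$; $S_\bot=\{j\in N\setminus S:S\cup\{j\}\in\mathcal{M}\}$. GREEDY: $G^0=\emptyset$; for $i=1,\dots,K$ choose $g_i\in\arg\max\{\rho_q(G^{i-1}):q\in G^{i-1}_\bot\}$, $G^i=G^{i-1}\cup\{g_i\}$, $G=G^K$, $\rho_i=\rho_{g_i}(G^{i-1})$. Discriminant $d_i=\rho_{g_i}(G^{i-1})/\max\{\rho_{g'}(G^{i-1}):g'\in G^{i-1}_\bot,g'\ne g_i\}$ ($=\infty$ if the maximum is $0$); $\rho_i/\infty=0$. *)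

theory Defs
  imports "HOL-Library.Extended_Real"
begin

definition matroid :: "'a set \<Rightarrow> 'a set set \<Rightarrow> bool" where
  "matroid N M \<longleftrightarrow> finite N \<and> M \<subseteq> Pow N \<and> {} \<in> M
     \<and> (\<forall>A B. B \<in> M \<and> A \<subseteq> B \<longrightarrow> A \<in> M)
     \<and> (\<forall>A B. A \<in> M \<and> B \<in> M \<and> card A < card B \<longrightarrow> (\<exists>x\<in>B - A. insert x A \<in> M))"

definition matroid_rank_is :: "'a set \<Rightarrow> 'a set set \<Rightarrow> nat \<Rightarrow> bool" where
  "matroid_rank_is N M K \<longleftrightarrow> (\<exists>B\<in>M. card B = K) \<and> (\<forall>A\<in>M. card A \<le> K)"

definition basis :: "'a set set \<Rightarrow> nat \<Rightarrow> 'a set \<Rightarrow> bool" where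
  "basis M K B \<longleftrightarrow> B \<in> M \<and> card B = K"

definition optimal_basis :: "'a set set \<Rightarrow> nat \<Rightarrow> ('a set \<Rightarrow> real) \<Rightarrow> 'a set \<Rightarrow> bool" where
  "optimal_basis M K Z B \<longleftrightarrow> basis M K B \<and> (\<forall>B'\<in>M. Z B' \<le> Z B)"

definition monotone_fn :: "'a set \<Rightarrow> ('a set \<Rightarrow> real) \<Rightarrow> bool" where
  "monotone_fn N Z \<longleftrightarrow> (\<forall>S T. S \<subseteq> T \<and> T \<subseteq> N \<longrightarrow> Z S \<le> Z T)"

definition submodular_fn :: "'a set \<Rightarrow> ('a set \<Rightarrow> real) \<Rightarrow> bool" where
  "submodular_fn N Z \<longleftrightarrow> (\<forall>A B. A \<subseteq> N \<and> B \<subseteq> N \<longrightarrow> Z (A \<union> B) + Z (A \<inter> B) \<le> Z A + Z B)"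

definition rho :: "('a set \<Rightarrow> real) \<Rightarrow> 'a \<Rightarrow> 'a set \<Rightarrow> real" where
  "rho Z q S = Z (S \<union> {q}) - Z S"

definition bot_set :: "'a set \<Rightarrow> 'a set set \<Rightarrow> 'a set \<Rightarrow> 'a set" where
  "bot_set N M S = {j \<in> N - S. S \<union> {j} \<in> M}"

definition Gpre :: "(nat \<Rightarrow> 'a) \<Rightarrow> nat \<Rightarrow> 'a set" where
  "Gpre g i = g ` {1..i}"

definition greedy_run :: "'a set \<Rightarrow> 'a set set \<Rightarrow> ('a set \<Rightarrow> real) \<Rightarrow> nat \<Rightarrow> (nat \<Rightarrow> 'a) \<Rightarrow> bool" where
  "greedy_run N M Z K g \<longleftrightarrow> (\<forall>i\<in>{1..K}.
      g i \<in> bot_set N M (Gpre g (i - 1)) \<and>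
      (\<forall>q\<in>bot_set N M (Gpre g (i - 1)). rho Z q (Gpre g (i - 1)) \<le> rho Z (g i) (Gpre g (i - 1))))"

definition rho_i :: "('a set \<Rightarrow> real) \<Rightarrow> (nat \<Rightarrow> 'a) \<Rightarrow> nat \<Rightarrow> real" where
  "rho_i Z g i = rho Z (g i) (Gpre g (i - 1))"

definition discr :: "'a set \<Rightarrow> 'a set set \<Rightarrow> ('a set \<Rightarrow> real) \<Rightarrow> (nat \<Rightarrow> 'a) \<Rightarrow> nat \<Rightarrow> ereal" where
  "discr N M Z g i = (let S = Gpre g (i - 1); C = bot_set N M S - {g i} in
     if C = {} then \<infinity> else
     (let m = Max ((\<lambda>q. rho Z q S) ` C) in
      if m = 0 then \<infinity> else ereal (rho_i Z g i / m)))"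

end

theory Submission
  imports Defs
begin

text \<open>For \<open>i > t\<close> the element \<open>\<omega>\<^sub>i\<close> is still a feasible candidate at step \<open>t\<close>, since
  \<open>G\<^bsub>t-1\<^esub> \<union> {\<omega>\<^sub>i}\<close> is a subset of the independent set \<open>G\<^bsub>i-1\<^esub> \<union> {\<omega>\<^sub>i}\<close>; so the greedy
  choice \<open>g\<^sub>t\<close> gains at least as much. For \<open>i \<le> t\<close>, submodularity moves the marginal gain
  back from \<open>G\<^bsub>t-1\<^esub>\<close> to \<open>G\<^bsub>i-1\<^esub>\<close>, where \<open>\<omega>\<^sub>i \<noteq> g\<^sub>i\<close> competes with \<open>g\<^sub>i\<close>; its gain is
  then at most the best competing gain, which is exactly \<open>\<rho>\<^sub>i / d\<^sub>i\<close>.\<close>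

lemma Gpre_mono: "a \<le> b \<Longrightarrow> Gpre g a \<subseteq> Gpre g b"
  unfolding Gpre_def by auto

lemma monotone_fnD: "monotone_fn N Z \<Longrightarrow> S \<subseteq> T \<Longrightarrow> T \<subseteq> N \<Longrightarrow> Z S \<le> Z T"
  unfolding monotone_fn_def by blast

lemma submodular_fnD:
  "submodular_fn N Z \<Longrightarrow> A \<subseteq> N \<Longrightarrow> B \<subseteq> N \<Longrightarrow> Z (A \<union> B) + Z (A \<inter> B) \<le> Z A + Z B"
  unfolding submodular_fn_def by simp

lemma rho_nonneg:
  assumes "monotone_fn N Z" "S \<subseteq> N" "w \<in> N"
  shows "0 \<le> rho Z w S"
proof -
  have "Z S \<le> Z (S \<union> {w})" using assms by (intro monotone_fnD[OF assms(1)]) auto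
  then show ?thesis unfolding rho_def by simp
qed

lemma rho_antimono:
  assumes "submodular_fn N Z" "S \<subseteq> T" "T \<subseteq> N" "w \<in> N" "w \<notin> T"
  shows "rho Z w T \<le> rho Z w S"
proof -
  have "Z ((S \<union> {w}) \<union> T) + Z ((S \<union> {w}) \<inter> T) \<le> Z (S \<union> {w}) + Z T"
    using assms by (intro submodular_fnD[OF assms(1)]) auto
  moreover have "(S \<union> {w}) \<union> T = T \<union> {w}" "(S \<union> {w}) \<inter> T = S"
    using assms by auto
  ultimately show ?thesis unfolding rho_def by simp
qed

lemma greedy_run_step:
  assumes "greedy_run N M Z K g" "i \<in> {1..K}"
  shows "g i \<in> bot_set N M (Gpre g (i - 1))"
    and "q \<in> bot_set N M (Gpre g (i - 1)) \<Longrightarrow> rho Z q (Gpre g (i - 1)) \<le> rho_i Z g i"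
  using assms unfolding greedy_run_def rho_i_def by auto

lemma greedy_run_Gpre_subset:
  assumes "greedy_run N M Z K g" "a \<le> K"
  shows "Gpre g a \<subseteq> N"
proof
  fix x assume "x \<in> Gpre g a"
  then obtain j where "j \<in> {1..a}" "x = g j" unfolding Gpre_def by auto
  with assms greedy_run_step(1) show "x \<in> N" unfolding bot_set_def by fastforce
qed

lemma bot_set_mono:
  assumes "matroid N M" "S \<subseteq> T" "T \<union> {w} \<in> M" "w \<in> N" "w \<notin> S"
  shows "w \<in> bot_set N M S"
proof -
  have "S \<union> {w} \<in> M"
    using assms unfolding matroid_def by (meson Un_mono subset_refl)
  with assms show ?thesis unfolding bot_set_def by blast
qed

text \<open>If every competitor of \<open>g\<^sub>i\<close> gains \<open>0\<close>, then \<open>d\<^sub>i = \<infinity>\<close> and the bound degenerates to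
  \<open>\<rho>\<^sub>i / \<infinity> = 0\<close>.\<close>
lemma greedy_run_competitor_le_discr:
  assumes "matroid N M" "monotone_fn N Z" "greedy_run N M Z K g" "i \<in> {1..K}"
    and "q \<in> bot_set N M (Gpre g (i - 1))" "q \<noteq> g i"
  shows "ereal (rho Z q (Gpre g (i - 1))) \<le> ereal (rho_i Z g i) / discr N M Z g i"
proof -
  define S where "S = Gpre g (i - 1)"
  define C where "C = bot_set N M S - {g i}"
  define m where "m = Max ((\<lambda>q. rho Z q S) ` C)"
  have "finite C"
    using assms(1) unfolding matroid_def C_def bot_set_def by auto
  moreover have qC: "q \<in> C"
    using assms(5,6) unfolding C_def S_def by blast
  ultimately have q_le_m: "rho Z q S \<le> m" and "m \<in> (\<lambda>q. rho Z q S) ` C"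
    unfolding m_def by (auto intro: Max_in)
  then obtain p where p: "p \<in> C" "m = rho Z p S" by auto
  have "S \<subseteq> N"
    unfolding S_def using assms(3,4) by (intro greedy_run_Gpre_subset) auto
  then have "0 \<le> m"
    using p rho_nonneg[OF assms(2)] unfolding C_def bot_set_def by auto
  have "m \<le> rho_i Z g i"
    using p greedy_run_step(2)[OF assms(3,4)] unfolding C_def S_def by auto
  have discr_eq: "discr N M Z g i = (if m = 0 then \<infinity> else ereal (rho_i Z g i / m))"
    using qC unfolding discr_def Let_def S_def C_def m_def by auto
  show ?thesis
  proof (cases "m = 0")
    case True
    then show ?thesis using discr_eq q_le_m unfolding S_def by simp
  next
    case False
    then show ?thesis
      using discr_eq q_le_m \<open>0 \<le> m\<close> \<open>m \<le> rho_i Z g i\<close> unfolding S_def by simp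
  qed
qed

text \<open>Only the exchange property \<open>G\<^sup>i\<^sup>-\<^sup>1 \<union> {\<omega>\<^sub>i} \<in> \<M>\<close> and \<open>\<omega>\<^sub>i \<notin> G\<close> are needed.\<close>
theorem lemma11:
  fixes N :: "'a set" and M :: "'a set set" and K :: nat
    and Z :: "'a set \<Rightarrow> real" and g \<omega> :: "nat \<Rightarrow> 'a"
  assumes "matroid N M" and "matroid_rank_is N M K"
    and "monotone_fn N Z" and "submodular_fn N Z" and "Z {} = 0"
    and "greedy_run N M Z K g"
    and "optimal_basis M K Z (\<omega> ` {1..K})" and "inj_on \<omega> {1..K}"
    and "\<forall>i\<in>{1..K}. Gpre g (i - 1) \<union> {\<omega> i} \<in> M"
    and "\<forall>i\<in>{1..K}. \<omega> i \<in> Gpre g K \<inter> \<omega> ` {1..K} \<longrightarrow> \<omega> i = g i"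
  shows "\<forall>t\<in>{1..K}. \<forall>i\<in>{1..K}. \<omega> i \<in> \<omega> ` {1..K} - Gpre g K \<longrightarrow>
           (i > t \<longrightarrow> rho Z (\<omega> i) (Gpre g (t - 1)) \<le> rho_i Z g t) \<and>
           (i \<le> t \<longrightarrow> ereal (rho Z (\<omega> i) (Gpre g (t - 1))) \<le> ereal (rho_i Z g i) / discr N M Z g i)"
proof (intro ballI impI conjI)
  fix t i assume t: "t \<in> {1..K}" and i: "i \<in> {1..K}" and "\<omega> i \<in> \<omega> ` {1..K} - Gpre g K"
  then have not_in_G: "\<omega> i \<notin> Gpre g a" if "a \<le> K" for a
    using Gpre_mono[OF that, of g] by blast
  have indep: "Gpre g (i - 1) \<union> {\<omega> i} \<in> M" using assms(9) i by blast
  then have "\<omega> i \<in> N" using assms(1) unfolding matroid_def by blast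
  show "rho Z (\<omega> i) (Gpre g (t - 1)) \<le> rho_i Z g t" if "i > t"
  proof -
    have "\<omega> i \<in> bot_set N M (Gpre g (t - 1))"
      using that t by (intro bot_set_mono[OF assms(1) Gpre_mono indep \<open>\<omega> i \<in> N\<close> not_in_G]) auto
    then show ?thesis by (rule greedy_run_step(2)[OF assms(6) t])
  qed
  show "ereal (rho Z (\<omega> i) (Gpre g (t - 1))) \<le> ereal (rho_i Z g i) / discr N M Z g i"
    if "i \<le> t"
  proof -
    have "rho Z (\<omega> i) (Gpre g (t - 1)) \<le> rho Z (\<omega> i) (Gpre g (i - 1))"
      using that t by (intro rho_antimono[OF assms(4) Gpre_mono greedy_run_Gpre_subset[OF assms(6)]
          \<open>\<omega> i \<in> N\<close> not_in_G]) auto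
    moreover have "\<omega> i \<noteq> g i"
      using i not_in_G[of K] unfolding Gpre_def by auto
    then have "ereal (rho Z (\<omega> i) (Gpre g (i - 1))) \<le> ereal (rho_i Z g i) / discr N M Z g i"
      using i by (intro greedy_run_competitor_le_discr[OF assms(1,3,6) i]
          bot_set_mono[OF assms(1) subset_refl indep \<open>\<omega> i \<in> N\<close> not_in_G]) auto
    ultimately show ?thesis by (meson ereal_less_eq(3) order_trans)
  qed
qed

end
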